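(* Let $X$ be a real Hilbert space with inner product $\langle\cdot,\cdot\rangle_X$, let $E\colon X\to\mathbb R$ be a twice differentiable convex energy, and let $P\colon\mathbb R^p\to X$, $\theta\mapsto u_\theta$, be a differentiable parametrization. Set $L(\theta)\coloneqq E(u_\theta)$, let $\nabla L(\theta)\in\mathbb R^p$ be its Euclidean gradient, define the energy Gram matrix $G_E(\theta)\in\mathbb R^{p\times p}$ by $G_E(\theta)_{ij}\coloneqq D^2E(u_\theta)(\partial_{\theta_i}u_\theta,\partial_{\theta_j}u_\theta)$, and define the energy natural gradient $\nabla^E L(\theta)\coloneqq G_E(\theta)^+\nabla L(\theta)$. Let $T_\theta\mathcal F_\Theta\coloneqq\operatorname{span}\{\partial_{\theta_i}u_\theta : i=1,\dots,p\}\subseteq X$ and let $DP_\theta\colon\mathbb R^p\to X$ denote the derivative of $P$ at $\theta$. (i) If $D^2E(u)$ is coercive for every $u\in X$, then $$DP_\theta\nabla^EL(\theta) = \Pi_{T_\theta \mathcal F_\Theta}^{D^2E(u_\theta)}\big(D^2E(u_\theta)^{-1} \nabla E(u_\theta)\big),$$ where $D^2E(u_\theta)$ is identified (via the Riesz representation) with an operator $X\to X$, $\nabla E(u_\theta)\in X$ is the gradient of $E$ with respect to $\langle\cdot,\cdot\rangle_X$, and $\Pi_{T_\theta \mathcal F_\Theta}^{D^2E(u_\theta)}$ denotes the orthogonal projection onto $T_\theta\mathcal F_\Theta$ with respect to the inner product $(v,w)\mapsto D^2E(u_\theta)(v,w)$. (ii) If $E$ is a quadratic function whose second derivative $D^2E=a$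 is a bounded, positive definite symmetric bilinear form on $X$, and $E$ admits a minimizer $u^*\in X$, then $$DP_\theta\nabla^EL(\theta) = \Pi_{T_\theta \mathcal F_\Theta}^{a}( u_\theta - u^* ),$$ where $\Pi_{T_\theta \mathcal F_\Theta}^{a}$ denotes the orthogonal projection onto $T_\theta\mathcal F_\Theta$ with respect to the inner product $a$.
   Context: For a matrix $A$, $A^+$ denotes any pseudo-inverse of $A$ (a generalized inverse, i.e. a matrix with $AA^+A=A$). For a finite-dimensional subspace $V$ of a vector space with inner product $b$, the projection $\Pi^b_V(x)$ is the unique element of $V$ with $b(\Pi^b_V(x),z)=b(x,z)$ for all $z\in V$. *)

theory Defs
  imports "HOL-Analysis.Analysis"
begin

definition bproj :: "('a \<Rightarrow> 'a \<Rightarrow> real) \<Rightarrow> 'a set \<Rightarrow> 'a \<Rightarrow> 'a" where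
  "bproj b V x = (THE y. y \<in> V \<and> (\<forall>z\<in>V. b y z = b x z))"

definition egrad :: "(real^'p \<Rightarrow> real) \<Rightarrow> real^'p \<Rightarrow> real^'p" where
  "egrad f x = (\<chi> i. frechet_derivative f (at x) (axis i 1))"

definition partials :: "(real^'p \<Rightarrow> 'a::real_vector) \<Rightarrow> 'p \<Rightarrow> 'a" where
  "partials DPt i = DPt (axis i 1)"

definition energy_gram :: "('a \<Rightarrow> 'a \<Rightarrow> real) \<Rightarrow> (real^'p \<Rightarrow> 'a::real_vector) \<Rightarrow> real^'p^'p" where
  "energy_gram D2 DPt = (\<chi> i j. D2 (partials DPt i) (partials DPt j))"

definition quadratic_fun :: "('a::real_normed_vector \<Rightarrow> real) \<Rightarrow> bool" where
  "quadratic_fun E \<longleftrightarrow> (\<exists>q l c. bounded_bilinear q \<and> bounded_linear l \<and>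
       (\<forall>u. E u = q u u + l u + c))"

end

theory Submission
  imports Defs
begin

(* Write x for D2E(u_theta)^{-1} grad E(u_theta), resp. u_theta - u*.  Then the Euclidean gradient of
   L is the vector of values D2E(u_theta)(x, d_k u_theta), and the Gram matrix G represents
   D2E(u_theta) in the coordinates of DP_theta.  G is symmetric and grad L vanishes on its kernel,
   so grad L lies in the range of G and any generalized inverse solves G c = grad L; the equations
   G c = grad L say precisely that DP_theta c is the D2E(u_theta)-projection of x onto T_theta.
   The inverse exists by coercivity (a Banach fixed point argument); in the quadratic case grad E is
   affine and vanishes at the minimizer.  Symmetry of D2E(u) comes from the second difference
   quotient of E, which is symmetric in the two directions. *)

definition second_difference :: "('a::real_vector \<Rightarrow> real) \<Rightarrow> 'a \<Rightarrow> 'a \<Rightarrow> 'a \<Rightarrow> real \<Rightarrow> real"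
  where "second_difference E u v w s = E (u + s *\<^sub>R v + s *\<^sub>R w) - E (u + s *\<^sub>R v) - E (u + s *\<^sub>R w) + E u"

lemma second_difference_commute: "second_difference E u v w s = second_difference E u w v s"
  by (simp add: second_difference_def algebra_simps)

lemma second_difference_bound:
  fixes E :: "'a::real_inner \<Rightarrow> real"
  assumes grad: "\<And>y. (E has_derivative (\<lambda>h. gradE y \<bullet> h)) (at y)"
    and lin: "linear H"
    and approx: "\<And>y. norm (y - u) < d \<Longrightarrow> norm (gradE y - gradE u - H (y - u)) \<le> e * norm (y - u)"
    and s: "0 < s" "s * (norm v + norm w) < d" and e: "0 \<le> e"
  shows "\<bar>second_difference E u v w s - s\<^sup>2 * (H v \<bullet> w)\<bar> \<le> 2 * e * s\<^sup>2 * (norm v + norm w)\<^sup>2"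
proof -
  define \<phi> where "\<phi> t = E (u + s *\<^sub>R v + t *\<^sub>R w) - E (u + t *\<^sub>R w) - t * (s * (H v \<bullet> w))" for t
  define \<delta> where "\<delta> t = gradE (u + s *\<^sub>R v + t *\<^sub>R w) - gradE (u + t *\<^sub>R w) - s *\<^sub>R H v" for t
  have "(\<phi> has_real_derivative \<delta> t \<bullet> w) (at t)" for t
  proof -
    have "((\<lambda>t. E (a + t *\<^sub>R w)) has_real_derivative gradE (a + t *\<^sub>R w) \<bullet> w) (at t)" for a
    proof -
      have "((\<lambda>t. a + t *\<^sub>R w) has_derivative (\<lambda>h. h *\<^sub>R w)) (at t)"
        by (auto intro!: derivative_eq_intros)
      from has_derivative_compose[OF this grad] show ?thesis
        by (rule has_derivative_imp_has_field_derivative) simp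
    qed
    note dE = this[of "u + s *\<^sub>R v"] this[of u]
    show ?thesis
      unfolding \<phi>_def \<delta>_def
      using DERIV_diff[OF DERIV_diff[OF dE] DERIV_cmult_right[OF DERIV_ident, of "s * (H v \<bullet> w)"]]
      by (simp add: inner_diff_left add.assoc)
  qed
  then obtain z where z: "0 < z" "z < s" and mvt: "\<phi> s - \<phi> 0 = s * (\<delta> z \<bullet> w)"
    using MVT2[OF s(1), of \<phi> "\<lambda>t. \<delta> t \<bullet> w"] by auto
  have zw: "norm (z *\<^sub>R w) \<le> s * norm w"
    using z by (simp add: mult_right_mono)
  have sv: "0 \<le> s * norm v"
    using s(1) by simp
  have szw: "norm (s *\<^sub>R v + z *\<^sub>R w) \<le> s * (norm v + norm w)"
    using norm_triangle_ineq[of "s *\<^sub>R v" "z *\<^sub>R w"] zw s(1) by (simp add: distrib_left)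
  have zw': "norm (z *\<^sub>R w) \<le> s * (norm v + norm w)"
    using zw sv unfolding distrib_left by linarith
  have "\<delta> z = (gradE (u + (s *\<^sub>R v + z *\<^sub>R w)) - gradE u - H (s *\<^sub>R v + z *\<^sub>R w))
              - (gradE (u + z *\<^sub>R w) - gradE u - H (z *\<^sub>R w))"
    by (simp add: \<delta>_def linear_add[OF lin] linear_scale[OF lin] algebra_simps)
  also have "norm \<dots> \<le> e * norm (s *\<^sub>R v + z *\<^sub>R w) + e * norm (z *\<^sub>R w)"
    using approx[of "u + (s *\<^sub>R v + z *\<^sub>R w)"] approx[of "u + z *\<^sub>R w"] szw zw' s(2)
    by (intro order_trans[OF norm_triangle_ineq4 add_mono]) simp_all
  also have "\<dots> \<le> e * (s * (norm v + norm w)) + e * (s * (norm v + norm w))"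
    by (intro add_mono mult_left_mono szw zw' e)
  finally have "norm (\<delta> z) \<le> 2 * e * s * (norm v + norm w)"
    by simp
  then have "norm (\<delta> z) * norm w \<le> 2 * e * s * (norm v + norm w) * (norm v + norm w)"
    using e s(1) by (intro mult_mono) simp_all
  moreover have "\<bar>\<delta> z \<bullet> w\<bar> \<le> norm (\<delta> z) * norm w"
    by (rule Cauchy_Schwarz_ineq2)
  moreover have "second_difference E u v w s - s\<^sup>2 * (H v \<bullet> w) = s * (\<delta> z \<bullet> w)"
    using mvt by (simp add: second_difference_def \<phi>_def power2_eq_square algebra_simps)
  ultimately show ?thesis
    using s(1) by (simp add: abs_mult power2_eq_square)
qed

lemma second_difference_tendsto:
  fixes E :: "'a::real_inner \<Rightarrow> real"
  assumes grad: "\<And>y. (E has_derivative (\<lambda>h. gradE y \<bullet> h)) (at y)"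
    and hess: "(gradE has_derivative H) (at u)"
  shows "((\<lambda>s. second_difference E u v w s / s\<^sup>2) \<longlongrightarrow> H v \<bullet> w) (at_right 0)"
proof (rule tendstoI)
  fix \<epsilon> :: real assume "0 < \<epsilon>"
  define N where "N = norm v + norm w"
  define e where "e = \<epsilon> / (2 * N\<^sup>2 + 1)"
  have "0 < 2 * N\<^sup>2 + 1"
    by (simp add: add_nonneg_pos)
  then have e: "0 < e" "2 * e * N\<^sup>2 < \<epsilon>"
    using \<open>0 < \<epsilon>\<close> by (simp_all add: e_def field_simps)
  obtain d where "0 < d"
    and approx: "\<And>y. norm (y - u) < d \<Longrightarrow> norm (gradE y - gradE u - H (y - u)) \<le> e * norm (y - u)"
    using hess e(1) unfolding has_derivative_at_alt by blast
  have lin: "linear H"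
    using has_derivative_linear[OF hess] .
  have "\<forall>\<^sub>F s in at_right 0. s \<in> {0<..<d / (N + 1)}"
    using \<open>0 < d\<close> by (intro eventually_at_right_real) (simp add: N_def add_nonneg_pos)
  then show "\<forall>\<^sub>F s in at_right 0.
    dist (second_difference E u v w s / s\<^sup>2) (H v \<bullet> w) < \<epsilon>"
  proof (rule eventually_mono)
    fix s assume "s \<in> {0<..<d / (N + 1)}"
    moreover have "0 \<le> N"
      by (simp add: N_def)
    ultimately have s: "0 < s" "s * N < d"
      by (auto simp: field_simps)
    have "\<bar>second_difference E u v w s - s\<^sup>2 * (H v \<bullet> w)\<bar>
          \<le> 2 * e * N\<^sup>2 * s\<^sup>2"
      using second_difference_bound[OF grad lin approx s(1) _ less_imp_le[OF e(1)]] s(2)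
      by (simp add: N_def mult_ac)
    also have "\<dots> < \<epsilon> * s\<^sup>2"
      using e(2) s(1) by (intro mult_strict_right_mono) simp_all
    finally show "dist (second_difference E u v w s / s\<^sup>2)
                 (H v \<bullet> w) < \<epsilon>"
      using s(1) by (simp add: dist_real_def field_simps)
  qed
qed

lemma hessian_symmetric:
  fixes E :: "'a::real_inner \<Rightarrow> real"
  assumes grad: "\<And>y. (E has_derivative (\<lambda>h. gradE y \<bullet> h)) (at y)"
    and hess: "(gradE has_derivative H) (at u)"
  shows "H v \<bullet> w = H w \<bullet> v"
proof (rule tendsto_unique[OF trivial_limit_at_right_real])
  show "((\<lambda>s. second_difference E u v w s / s\<^sup>2)
           \<longlongrightarrow> H v \<bullet> w) (at_right 0)"
    by (rule second_difference_tendsto[OF grad hess])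
  show "((\<lambda>s. second_difference E u v w s / s\<^sup>2)
           \<longlongrightarrow> H w \<bullet> v) (at_right 0)"
    using second_difference_tendsto[OF grad hess, of w v] by (simp only: second_difference_commute)
qed

lemma linear_axis_expansion:
  fixes D :: "real^'n \<Rightarrow> 'a::real_vector"
  assumes "linear D"
  shows "D c = (\<Sum>i\<in>UNIV. c $ i *\<^sub>R D (axis i 1))"
proof -
  have "D c = D (\<Sum>i\<in>UNIV. c $ i *\<^sub>R axis i 1)"
    using basis_expansion[of c] by (simp add: scalar_mult_eq_scaleR)
  then show ?thesis
    by (simp add: linear_sum[OF assms] linear_scale[OF assms])
qed

lemma linear_functional_eq_inner:
  fixes f :: "real^'n \<Rightarrow> real"
  assumes "linear f"
  shows "(\<chi> i. f (axis i 1)) \<bullet> c = f c"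
  by (subst linear_axis_expansion[OF assms]) (simp add: inner_vec_def mult.commute)

lemma egrad_eq_derivative_axis:
  assumes "(f has_derivative f') (at x)"
  shows "egrad f x = (\<chi> i. f' (axis i 1))"
  using frechet_derivative_at[OF assms] by (simp add: egrad_def)

lemma span_partials_eq_range:
  assumes "linear D"
  shows "span (range (partials D)) = range D"
proof
  show "span (range (partials D)) \<subseteq> range D"
    using assms by (intro span_minimal linear_subspace_image subspace_UNIV) (auto simp: partials_def)
  show "range D \<subseteq> span (range (partials D))"
  proof clarify
    fix c
    show "D c \<in> span (range (partials D))"
      unfolding linear_axis_expansion[OF assms, of c] partials_def[symmetric]
      by (intro span_sum span_scale span_base) auto
  qed
qed

lemma bilinear_eq_inner_energy_gram:
  fixes D :: "real^'p \<Rightarrow> 'a::real_vector"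
  assumes b: "bilinear b" and D: "linear D"
  shows "b (D e) (D c) = e \<bullet> (energy_gram b D *v c)"
proof -
  have "b (D e) (D c) = (\<Sum>i\<in>UNIV. \<Sum>j\<in>UNIV. e $ i * c $ j * b (partials D i) (partials D j))"
    unfolding linear_axis_expansion[OF D, of e] linear_axis_expansion[OF D, of c] partials_def
    by (simp add: bilinear_sum[OF b] bilinear_lmul[OF b] bilinear_rmul[OF b] mult_ac)
      (simp add: sum.cartesian_product)
  also have "\<dots> = e \<bullet> (energy_gram b D *v c)"
    by (simp add: inner_vec_def matrix_vector_mult_def energy_gram_def sum_distrib_left mult_ac)
  finally show ?thesis .
qed

lemma linear_imp_bilinear_inner:
  "linear H \<Longrightarrow> bilinear (\<lambda>v w. H v \<bullet> w)"
  by (simp add: bilinear_def linear_compose[of H "\<lambda>v. v \<bullet> _", unfolded o_def]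
      bounded_linear.linear[OF bounded_linear_inner_left] bounded_linear.linear[OF bounded_linear_inner_right])

lemma symmetric_matrix_range_orthogonal_kernel:
  fixes G :: "real^'n^'n"
  assumes "transpose G = G" and "\<And>z. G *v z = 0 \<Longrightarrow> y \<bullet> z = 0"
  shows "y \<in> range ((*v) G)"
proof -
  have "y \<in> ((*v) G -` {0})\<^sup>\<bottom>"
    using assms(2) by (auto simp: orthogonal_comp_def orthogonal_def inner_commute)
  also have "((*v) G -` {0})\<^sup>\<bottom> = range ((*v) G)"
    using ker_orthogonal_comp_adjoint[OF matrix_vector_mul_linear] assms(1)
    by (metis adjoint_matrix linear_subspace_image matrix_vector_mul_linear orthogonal_comp_self subspace_UNIV)
  finally show ?thesis .
qed

lemma bproj_eqI:
  assumes b: "bilinear b" and pos: "\<And>v. v \<noteq> 0 \<Longrightarrow> 0 < b v v"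
    and V: "subspace V" and "y \<in> V" and y: "\<And>z. z \<in> V \<Longrightarrow> b y z = b x z"
  shows "bproj b V x = y"
  unfolding bproj_def
proof (rule the_equality)
  show "y \<in> V \<and> (\<forall>z\<in>V. b y z = b x z)"
    using \<open>y \<in> V\<close> y by blast
  fix y' assume y': "y' \<in> V \<and> (\<forall>z\<in>V. b y' z = b x z)"
  then have "y' - y \<in> V"
    using \<open>y \<in> V\<close> V by (simp add: subspace_diff)
  then have "b (y' - y) (y' - y) = 0"
    using y y' by (simp add: bilinear_lsub[OF b])
  then show "y' = y"
    using pos[of "y' - y"] by auto
qed

lemma natural_gradient_eq_bproj:
  fixes D :: "real^'p \<Rightarrow> 'a::real_vector" and Gp :: "real^'p^'p"
  assumes b: "bilinear b" and sym: "\<And>v w. b v w = b w v" and pos: "\<And>v. v \<noteq> 0 \<Longrightarrow> 0 < b v v"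
    and D: "linear D"
    and pinv: "energy_gram b D ** Gp ** energy_gram b D = energy_gram b D"
  shows "D (Gp *v (\<chi> k. b x (D (axis k 1)))) = bproj b (span (range (partials D))) x"
proof -
  define G where "G = energy_gram b D"
  define g where "g = (\<chi> k. b x (D (axis k 1)))"
  have gram: "b (D e) (D c) = e \<bullet> (G *v c)" for e c
    unfolding G_def by (rule bilinear_eq_inner_energy_gram[OF b D])
  have grad: "g \<bullet> c = b x (D c)" for c
  proof -
    have "linear (\<lambda>c. b x (D c))"
      using b D by (simp add: bilinear_def linear_compose[of D "b x", unfolded o_def])
    then show ?thesis
      unfolding g_def by (rule linear_functional_eq_inner)
  qed
  have "g \<in> range ((*v) G)"
  proof (rule symmetric_matrix_range_orthogonal_kernel)
    show "transpose G = G"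
      using sym by (simp add: G_def energy_gram_def transpose_def vec_eq_iff)
    fix z assume "G *v z = 0"
    then have "D z = 0"
      using gram[of z z] pos[of "D z"] by auto
    then show "g \<bullet> z = 0"
      using grad[of z] bilinear_rzero[OF b] by simp
  qed
  then obtain c where "g = G *v c"
    by blast
  then have Gg: "G *v (Gp *v g) = g"
    using pinv by (simp add: G_def[symmetric] matrix_vector_mul_assoc matrix_mul_assoc)
  have "bproj b (range D) x = D (Gp *v g)"
  proof (rule bproj_eqI[OF b pos])
    show "subspace (range D)"
      using D by (rule linear_subspace_image[OF _ subspace_UNIV])
    fix z assume "z \<in> range D"
    then obtain c where "z = D c"
      by blast
    then show "b (D (Gp *v g)) z = b x z"
      using sym gram[of c "Gp *v g"] grad[of c] by (simp add: Gg inner_commute)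
  qed auto
  then show ?thesis
    by (simp add: span_partials_eq_range[OF D] g_def)
qed

lemma coercive_imp_surj:
  fixes H :: "'a::{real_inner, complete_space} \<Rightarrow> 'a"
  assumes bl: "bounded_linear H" and c: "0 < c" and coercive: "\<And>v. c * (norm v)\<^sup>2 \<le> H v \<bullet> v"
  shows "surj H"
proof -
  have lin: "linear H"
    using bl by (rule bounded_linear.linear)
  obtain K0 where K0: "\<And>x. norm (H x) \<le> norm x * K0"
    using bounded_linear.pos_bounded[OF bl] by blast
  define K where "K = max K0 c"
  have K: "0 < K" "c \<le> K"
    using c by (auto simp: K_def)
  have HK: "norm (H x) \<le> K * norm x" for x
    using order_trans[OF K0[of x] mult_left_mono[OF max.cobounded1 norm_ge_zero]]
    by (simp add: K_def mult.commute)
  define t where "t = c / K\<^sup>2"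
  define q where "q = sqrt (1 - c\<^sup>2 / K\<^sup>2)"
  have t: "0 < t"
    using c K by (simp add: t_def)
  have "0 < c\<^sup>2 / K\<^sup>2" "c\<^sup>2 / K\<^sup>2 \<le> 1"
    using c K by (simp_all add: power_mono)
  then have q: "0 \<le> q" "q < 1"
    by (simp_all add: q_def)
  have contraction: "norm (z - t *\<^sub>R H z) \<le> q * norm z" for z
  proof -
    have "(norm (z - t *\<^sub>R H z))\<^sup>2 = (norm z)\<^sup>2 - 2 * t * (H z \<bullet> z) + t\<^sup>2 * (norm (H z))\<^sup>2"
      by (simp only: power2_norm_eq_inner)
        (simp add: inner_diff_left inner_diff_right inner_commute power2_eq_square algebra_simps)
    also have "\<dots> \<le> (norm z)\<^sup>2 - 2 * t * (c * (norm z)\<^sup>2) + t\<^sup>2 * (K\<^sup>2 * (norm z)\<^sup>2)"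
    proof -
      have "2 * t * (c * (norm z)\<^sup>2) \<le> 2 * t * (H z \<bullet> z)"
        using coercive[of z] t by simp
      moreover have "(norm (H z))\<^sup>2 \<le> (K * norm z)\<^sup>2"
        using HK[of z] by (simp add: power_mono)
      then have "t\<^sup>2 * (norm (H z))\<^sup>2 \<le> t\<^sup>2 * (K\<^sup>2 * (norm z)\<^sup>2)"
        by (simp add: power_mult_distrib mult_left_mono)
      ultimately show ?thesis
        by linarith
    qed
    also have "\<dots> = (q * norm z)\<^sup>2"
      using K \<open>c\<^sup>2 / K\<^sup>2 \<le> 1\<close>
      by (simp add: q_def t_def power_mult_distrib field_simps power2_eq_square)
    finally show ?thesis
      using q(1) by (meson power2_le_imp_le mult_nonneg_nonneg norm_ge_zero)
  qed
  show "surj H"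
    unfolding surj_def
  proof
    fix g
    define T where "T x = x - t *\<^sub>R (H x - g)" for x
    have "dist (T x) (T y) \<le> q * dist x y" for x y
    proof -
      have "T x - T y = (x - y) - t *\<^sub>R H (x - y)"
        by (simp add: T_def linear_diff[OF lin] algebra_simps)
      then show ?thesis
        using contraction[of "x - y"] by (simp add: dist_norm)
    qed
    then obtain x where "T x = x"
      using banach_fix_type[OF q] by blast
    then show "\<exists>x. g = H x"
      using t by (auto simp: T_def)
  qed
qed

lemma constant_derivative_imp_affine:
  fixes f :: "'a::real_normed_vector \<Rightarrow> 'b::real_normed_vector"
  assumes deriv: "\<And>x. (f has_derivative L) (at x)"
  shows "f x - f y = L (x - y)"
proof -
  have L: "bounded_linear L"
    using has_derivative_bounded_linear[OF deriv] .
  have "\<exists>k. \<forall>x\<in>UNIV. f x - L x = k"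
  proof (rule has_derivative_zero_constant)
    fix x :: 'a
    show "((\<lambda>x. f x - L x) has_derivative (\<lambda>h. 0)) (at x within UNIV)"
      using has_derivative_diff[OF deriv bounded_linear_imp_has_derivative[OF L]] by simp
  qed simp
  then obtain k where "\<And>x. f x - L x = k"
    by blast
  then show ?thesis
    using linear_diff[OF bounded_linear.linear[OF L]] by (simp add: algebra_simps)
qed

lemma energy_natural_gradient_eq_bproj:
  fixes E :: "'a::real_inner \<Rightarrow> real" and P :: "real^'p \<Rightarrow> 'a" and Gp :: "real^'p^'p"
  assumes grad: "\<And>u. (E has_derivative (\<lambda>v. gradE u \<bullet> v)) (at u)"
    and hess: "(gradE has_derivative H) (at (P \<theta>))"
    and P: "(P has_derivative DP\<theta>) (at \<theta>)"
    and pos: "\<And>v. v \<noteq> 0 \<Longrightarrow> 0 < H v \<bullet> v"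
    and pinv: "energy_gram (\<lambda>v w. H v \<bullet> w) DP\<theta> ** Gp ** energy_gram (\<lambda>v w. H v \<bullet> w) DP\<theta>
               = energy_gram (\<lambda>v w. H v \<bullet> w) DP\<theta>"
    and x: "H x = gradE (P \<theta>)"
  shows "DP\<theta> (Gp *v egrad (E \<circ> P) \<theta>) = bproj (\<lambda>v w. H v \<bullet> w) (span (range (partials DP\<theta>))) x"
proof -
  have "egrad (E \<circ> P) \<theta> = (\<chi> k. H x \<bullet> DP\<theta> (axis k 1))"
    using egrad_eq_derivative_axis[OF has_derivative_compose[OF P grad]] by (simp add: x o_def)
  moreover have "bilinear (\<lambda>v w. H v \<bullet> w)"
    using linear_imp_bilinear_inner[OF has_derivative_linear[OF hess]] .
  ultimately show ?thesis
    using natural_gradient_eq_bproj[OF _ hessian_symmetric[OF grad hess] pos has_derivative_linear[OF P] pinv]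
    by simp
qed

lemma energy_natural_gradient_coercive:
  fixes E :: "'a::{real_inner, complete_space} \<Rightarrow> real" and P :: "real^'p \<Rightarrow> 'a"
    and Gp :: "real^'p^'p"
  assumes grad: "\<And>u. (E has_derivative (\<lambda>v. gradE u \<bullet> v)) (at u)"
    and hess: "(gradE has_derivative H) (at (P \<theta>))"
    and P: "(P has_derivative DP\<theta>) (at \<theta>)"
    and c: "0 < c" and coercive: "\<And>v. c * (norm v)\<^sup>2 \<le> H v \<bullet> v"
    and pinv: "energy_gram (\<lambda>v w. H v \<bullet> w) DP\<theta> ** Gp ** energy_gram (\<lambda>v w. H v \<bullet> w) DP\<theta>
               = energy_gram (\<lambda>v w. H v \<bullet> w) DP\<theta>"
  shows "DP\<theta> (Gp *v egrad (E \<circ> P) \<theta>)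
           = bproj (\<lambda>v w. H v \<bullet> w) (span (range (partials DP\<theta>))) (inv H (gradE (P \<theta>)))"
proof (rule energy_natural_gradient_eq_bproj[OF grad hess P _ pinv])
  show "0 < H v \<bullet> v" if "v \<noteq> 0" for v
    using c coercive[of v] that by (meson mult_pos_pos order_less_le_trans zero_less_norm_iff zero_less_power)
  have "surj H"
    using coercive_imp_surj[OF has_derivative_bounded_linear[OF hess] c coercive] .
  then show "H (inv H (gradE (P \<theta>))) = gradE (P \<theta>)"
    by (rule surj_f_inv_f)
qed

lemma energy_natural_gradient_quadratic:
  fixes E :: "'a::real_inner \<Rightarrow> real" and P :: "real^'p \<Rightarrow> 'a" and Gp :: "real^'p^'p"
  assumes grad: "\<And>u. (E has_derivative (\<lambda>v. gradE u \<bullet> v)) (at u)"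
    and hess: "\<And>u. (gradE has_derivative H) (at u)"
    and P: "(P has_derivative DP\<theta>) (at \<theta>)"
    and pos: "\<And>v. v \<noteq> 0 \<Longrightarrow> 0 < H v \<bullet> v"
    and pinv: "energy_gram (\<lambda>v w. H v \<bullet> w) DP\<theta> ** Gp ** energy_gram (\<lambda>v w. H v \<bullet> w) DP\<theta>
               = energy_gram (\<lambda>v w. H v \<bullet> w) DP\<theta>"
    and min: "\<And>u. E ustar \<le> E u"
  shows "DP\<theta> (Gp *v egrad (E \<circ> P) \<theta>)
           = bproj (\<lambda>v w. H v \<bullet> w) (span (range (partials DP\<theta>))) (P \<theta> - ustar)"
proof (rule energy_natural_gradient_eq_bproj[OF grad hess P pos pinv])
  have "(\<lambda>h. gradE ustar \<bullet> h) = (\<lambda>h. 0)"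
    using min by (intro has_derivative_local_min[OF grad]) simp
  then have "gradE ustar = 0"
    by (metis inner_eq_zero_iff)
  then show "H (P \<theta> - ustar) = gradE (P \<theta>)"
    using constant_derivative_imp_affine[OF hess, of "P \<theta>" ustar] by simp
qed

theorem theorem1:
  fixes E :: "'a::{real_inner, complete_space} \<Rightarrow> real"
    and gradE :: "'a \<Rightarrow> 'a"
    and HE :: "'a \<Rightarrow> 'a \<Rightarrow> 'a"
    and P :: "real^'p \<Rightarrow> 'a"
    and DP :: "real^'p \<Rightarrow> real^'p \<Rightarrow> 'a"
    and \<theta> :: "real^'p"
    and Gp :: "real^'p^'p"
  assumes E_diff: "\<And>u. (E has_derivative (\<lambda>v. gradE u \<bullet> v)) (at u)"
    and E_twice: "\<And>u. (gradE has_derivative HE u) (at u)"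
    and E_convex: "convex_on UNIV E"
    and P_diff: "\<And>t. (P has_derivative DP t) (at t)"
    and pinv: "energy_gram (\<lambda>v w. HE (P \<theta>) v \<bullet> w) (DP \<theta>) ** Gp
                 ** energy_gram (\<lambda>v w. HE (P \<theta>) v \<bullet> w) (DP \<theta>)
               = energy_gram (\<lambda>v w. HE (P \<theta>) v \<bullet> w) (DP \<theta>)"
  shows "((\<forall>u. \<exists>c>0. \<forall>v. c * (norm v)\<^sup>2 \<le> HE u v \<bullet> v) \<longrightarrow>
            DP \<theta> (Gp *v egrad (E \<circ> P) \<theta>)
            = bproj (\<lambda>v w. HE (P \<theta>) v \<bullet> w) (span (range (partials (DP \<theta>))))
                    (inv (HE (P \<theta>)) (gradE (P \<theta>))))
       \<and> (\<forall>a ustar. quadratic_fun E \<and> bounded_bilinear a \<and> (\<forall>v w. a v w = a w v)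
             \<and> (\<forall>v. v \<noteq> 0 \<longrightarrow> a v v > 0)
             \<and> (\<forall>u v w. HE u v \<bullet> w = a v w)
             \<and> (\<forall>u. E ustar \<le> E u) \<longrightarrow>
            DP \<theta> (Gp *v egrad (E \<circ> P) \<theta>)
            = bproj a (span (range (partials (DP \<theta>)))) (P \<theta> - ustar))"
proof -
  let ?H = "HE (P \<theta>)"
  have "DP \<theta> (Gp *v egrad (E \<circ> P) \<theta>)
          = bproj (\<lambda>v w. ?H v \<bullet> w) (span (range (partials (DP \<theta>)))) (inv ?H (gradE (P \<theta>)))"
    if "\<forall>u. \<exists>c>0. \<forall>v. c * (norm v)\<^sup>2 \<le> HE u v \<bullet> v"
    using that energy_natural_gradient_coercive[OF E_diff E_twice P_diff _ _ pinv] by blast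
  moreover have "DP \<theta> (Gp *v egrad (E \<circ> P) \<theta>) = bproj a (span (range (partials (DP \<theta>)))) (P \<theta> - ustar)"
    if quadratic: "quadratic_fun E \<and> bounded_bilinear a \<and> (\<forall>v w. a v w = a w v) \<and> (\<forall>v. v \<noteq> 0 \<longrightarrow> a v v > 0)
        \<and> (\<forall>u v w. HE u v \<bullet> w = a v w) \<and> (\<forall>u. E ustar \<le> E u)" for a ustar
  proof -
    have aHE: "\<And>u v w. HE u v \<bullet> w = a v w"
      using quadratic by blast
    then have a: "a = (\<lambda>v w. ?H v \<bullet> w)"
      by (simp add: fun_eq_iff)
    have "HE u = ?H" for u
      by (rule ext, rule vector_eq_rdot[THEN iffD1]) (simp add: aHE)
    then have hess: "\<And>u. (gradE has_derivative ?H) (at u)"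
      using E_twice by metis
    have pos: "\<And>v. v \<noteq> 0 \<Longrightarrow> 0 < ?H v \<bullet> v" and min: "\<And>u. E ustar \<le> E u"
      using quadratic by (simp_all add: aHE)
    show ?thesis
      unfolding a by (rule energy_natural_gradient_quadratic[OF E_diff hess P_diff pos pinv min])
  qed
  ultimately show ?thesis
    by blast
qed

end
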